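(* Let $P$ and $Q$ be posets such that $\Sigma P$ and $\Sigma Q$ are $\omega$ type spaces. Then the product topology of $\Sigma\sigma(P)$ and $\Sigma\sigma(Q)$ coincides with the Scott topology of the product poset $\sigma(P)\times\sigma(Q)$, i.e. $\Sigma\sigma(P)\times\Sigma\sigma(Q)=\Sigma(\sigma(P)\times\sigma(Q))$.
   Context: For a poset $P$, $\sigma(P)$ is the set of Scott open subsets of $P$ (a set $U$ is Scott open iff it is an upper set and for every directed $D$ whose supremum exists, $\bigvee D\in U$ implies $D\cap U\neq\emptyset$), and $\Sigma P=(P,\sigma(P))$. $\sigma(P)$ is ordered by inclusion, $\Sigma\sigma(P)$ is this poset with its Scott topology, and $\sigma(P)\times\sigma(Q)$ carries the coordinatewise order. A topological space is an $\omega$ type space if it has a subbase consisting of countable subsets. *)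

theory Defs
  imports "HOL-Analysis.Analysis"
begin

definition poset_on :: "'a set \<Rightarrow> ('a \<Rightarrow> 'a \<Rightarrow> bool) \<Rightarrow> bool" where
  "poset_on A le \<longleftrightarrow>
     (\<forall>x\<in>A. le x x) \<and>
     (\<forall>x\<in>A. \<forall>y\<in>A. le x y \<and> le y x \<longrightarrow> x = y) \<and>
     (\<forall>x\<in>A. \<forall>y\<in>A. \<forall>z\<in>A. le x y \<and> le y z \<longrightarrow> le x z)"

definition directed_in :: "'a set \<Rightarrow> ('a \<Rightarrow> 'a \<Rightarrow> bool) \<Rightarrow> 'a set \<Rightarrow> bool" where
  "directed_in A le D \<longleftrightarrow>
     D \<noteq> {} \<and> D \<subseteq> A \<and> (\<forall>x\<in>D. \<forall>y\<in>D. \<exists>z\<in>D. le x z \<and> le y z)"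

definition is_sup_in :: "'a set \<Rightarrow> ('a \<Rightarrow> 'a \<Rightarrow> bool) \<Rightarrow> 'a set \<Rightarrow> 'a \<Rightarrow> bool" where
  "is_sup_in A le D s \<longleftrightarrow>
     s \<in> A \<and> (\<forall>d\<in>D. le d s) \<and> (\<forall>u\<in>A. (\<forall>d\<in>D. le d u) \<longrightarrow> le s u)"

definition scott_open_in :: "'a set \<Rightarrow> ('a \<Rightarrow> 'a \<Rightarrow> bool) \<Rightarrow> 'a set \<Rightarrow> bool" where
  "scott_open_in A le U \<longleftrightarrow>
     U \<subseteq> A \<and>
     (\<forall>x\<in>U. \<forall>y\<in>A. le x y \<longrightarrow> y \<in> U) \<and>
     (\<forall>D s. directed_in A le D \<and> is_sup_in A le D s \<and> s \<in> U \<longrightarrow> D \<inter> U \<noteq> {})"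

definition scott_opens :: "'a set \<Rightarrow> ('a \<Rightarrow> 'a \<Rightarrow> bool) \<Rightarrow> 'a set set" where
  "scott_opens A le = {U. scott_open_in A le U}"

definition scott_topology :: "'a set \<Rightarrow> ('a \<Rightarrow> 'a \<Rightarrow> bool) \<Rightarrow> 'a topology" where
  "scott_topology A le = topology (scott_open_in A le)"

definition prod_le :: "('a \<Rightarrow> 'a \<Rightarrow> bool) \<Rightarrow> ('b \<Rightarrow> 'b \<Rightarrow> bool) \<Rightarrow> 'a \<times> 'b \<Rightarrow> 'a \<times> 'b \<Rightarrow> bool" where
  "prod_le le1 le2 p q \<longleftrightarrow> le1 (fst p) (fst q) \<and> le2 (snd p) (snd q)"

definition omega_type :: "'a topology \<Rightarrow> bool" where
  "omega_type X \<longleftrightarrow> (\<exists>S. (\<forall>s\<in>S. countable s) \<and> X = topology_generated_by S)"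

end

theory Submission
  imports Defs
begin

(* One inclusion holds for arbitrary posets: the projections of a directed set of a product are
   directed with the projections of its supremum as suprema, so an open rectangle of Scott open
   sets is Scott open for the product order.

   Conversely let W be Scott open in \<sigma>(P) \<times> \<sigma>(Q) and (A, B) \<in> W. In an \<omega> type space every open
   set is the directed union of its countable open subsets, so W contains a pair (C, C') of
   countable Scott open sets C \<subseteq> A, C' \<subseteq> B. Let F n, F' n consist of the first n elements of
   fixed enumerations of C and C'. Some rectangle of supersets of F n and F' n, which is open as
   these sets are finite, lies in W: otherwise pick (X n, Y n) \<notin> W in it. The sets
   Z k = C \<inter> (\<Inter>n\<ge>k. X n) are Scott open, since a directed set meeting C contains an element of
   some F N and hence of all X n with n \<ge> N; they increase to C, and likewise T k to C'. So the
   directed supremum (C, C') of the (Z k, T k) forces some (Z k, T k), and with it the larger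
   (X k, Y k), into W. *)

lemma scott_open_inI:
  assumes "U \<subseteq> A"
    and "\<And>x y. x \<in> U \<Longrightarrow> y \<in> A \<Longrightarrow> le x y \<Longrightarrow> y \<in> U"
    and "\<And>D s. directed_in A le D \<Longrightarrow> is_sup_in A le D s \<Longrightarrow> s \<in> U \<Longrightarrow> \<exists>d\<in>D. d \<in> U"
  shows "scott_open_in A le U"
  unfolding scott_open_in_def using assms by blast

lemma scott_open_in_subset: "scott_open_in A le U \<Longrightarrow> U \<subseteq> A"
  unfolding scott_open_in_def by blast

lemma scott_open_in_upward:
  "scott_open_in A le U \<Longrightarrow> x \<in> U \<Longrightarrow> y \<in> A \<Longrightarrow> le x y \<Longrightarrow> y \<in> U"
  unfolding scott_open_in_def by blast

lemma scott_open_in_directed: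
  "scott_open_in A le U \<Longrightarrow> directed_in A le D \<Longrightarrow> is_sup_in A le D s \<Longrightarrow> s \<in> U \<Longrightarrow> \<exists>d\<in>D. d \<in> U"
  unfolding scott_open_in_def by blast

lemma directed_in_finite_upper_bound:
  assumes "poset_on A le" and "directed_in A le D" and "finite F" and "F \<subseteq> D"
  shows "\<exists>z\<in>D. \<forall>x\<in>F. le x z"
  using assms(3,4)
proof (induction F rule: finite_induct)
  case empty
  then show ?case using assms(2) unfolding directed_in_def by blast
next
  case (insert x F)
  then obtain z where z: "z \<in> D" "\<forall>y\<in>F. le y z" by blast
  obtain z' where z': "z' \<in> D" "le x z'" "le z z'"
    using assms(2) z(1) insert.prems unfolding directed_in_def by blast
  have trans: "\<And>a b c. a \<in> A \<Longrightarrow> b \<in> A \<Longrightarrow> c \<in> A \<Longrightarrow> le a b \<Longrightarrow> le b c \<Longrightarrow> le a c"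
    using assms(1) unfolding poset_on_def by blast
  have "D \<subseteq> A" using assms(2) unfolding directed_in_def by blast
  then have "le y z'" if "y \<in> F" for y
    using trans[of y z z'] that z z' insert.prems by blast
  then show ?case using z' by blast
qed

lemma directed_Union_finite_subset:
  assumes "directed_in L (\<subseteq>) \<D>" and "finite F" and "F \<subseteq> \<Union>\<D>"
  shows "\<exists>X\<in>\<D>. F \<subseteq> X"
  using assms(2,3)
proof (induction F rule: finite_induct)
  case empty
  then show ?case using assms(1) unfolding directed_in_def by auto
next
  case (insert x F)
  obtain X where X: "X \<in> \<D>" "F \<subseteq> X" using insert.IH insert.prems by blast
  obtain X' where X': "X' \<in> \<D>" "x \<in> X'" using insert.prems by blast
  have "\<forall>X\<in>\<D>. \<forall>Y\<in>\<D>. \<exists>Z\<in>\<D>. X \<subseteq> Z \<and> Y \<subseteq> Z"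
    using assms(1) unfolding directed_in_def by blast
  then obtain Z where "Z \<in> \<D>" "X \<subseteq> Z" "X' \<subseteq> Z" using X(1) X'(1) by blast
  then show ?case using X(2) X'(2) by blast
qed

lemma directed_in_chain:
  fixes f :: "nat \<Rightarrow> 'a"
  assumes "range f \<subseteq> A" and "\<And>i j. i \<le> j \<Longrightarrow> le (f i) (f j)"
  shows "directed_in A le (range f)"
  unfolding directed_in_def
proof (intro conjI ballI)
  fix x y assume "x \<in> range f" "y \<in> range f"
  then obtain i j where "x = f i" "y = f j" by blast
  then have "le x (f (max i j))" "le y (f (max i j))"
    using assms(2) by simp_all
  then show "\<exists>z\<in>range f. le x z \<and> le y z" by blast
qed (use assms(1) in auto)

lemma directed_in_Times:
  assumes "directed_in A leA D" and "directed_in B leB E"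
  shows "directed_in (A \<times> B) (prod_le leA leB) (D \<times> E)"
  unfolding directed_in_def
proof (intro conjI ballI)
  fix p q assume "p \<in> D \<times> E" "q \<in> D \<times> E"
  then obtain z1 z2 where "z1 \<in> D" "leA (fst p) z1" "leA (fst q) z1"
    and "z2 \<in> E" "leB (snd p) z2" "leB (snd q) z2"
    using assms unfolding directed_in_def by (metis mem_Times_iff)
  then show "\<exists>z\<in>D \<times> E. prod_le leA leB p z \<and> prod_le leA leB q z"
    unfolding prod_le_def by (intro bexI[of _ "(z1, z2)"]) auto
qed (use assms in \<open>auto simp: directed_in_def\<close>)

lemma directed_in_prod_projections:
  assumes "directed_in (A \<times> B) (prod_le leA leB) D"
  shows "directed_in A leA (fst ` D)" and "directed_in B leB (snd ` D)"
proof -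
  have ub: "\<exists>z\<in>D. prod_le leA leB p z \<and> prod_le leA leB q z" if "p \<in> D" "q \<in> D" for p q
    using assms that unfolding directed_in_def by blast
  have "D \<noteq> {}" "D \<subseteq> A \<times> B" using assms unfolding directed_in_def by blast+
  then show "directed_in A leA (fst ` D)" and "directed_in B leB (snd ` D)"
    using ub unfolding directed_in_def prod_le_def by fastforce+
qed

lemma is_sup_in_prod_iff:
  "is_sup_in (A \<times> B) (prod_le leA leB) D s \<longleftrightarrow>
     is_sup_in A leA (fst ` D) (fst s) \<and> is_sup_in B leB (snd ` D) (snd s)"
proof
  assume sup: "is_sup_in (A \<times> B) (prod_le leA leB) D s"
  then have s: "fst s \<in> A" "snd s \<in> B" "\<And>d. d \<in> D \<Longrightarrow> leA (fst d) (fst s) \<and> leB (snd d) (snd s)"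
    and least: "\<And>u. u \<in> A \<times> B \<Longrightarrow> \<forall>d\<in>D. prod_le leA leB d u \<Longrightarrow> prod_le leA leB s u"
    unfolding is_sup_in_def prod_le_def by auto
  have "leA (fst s) u" if "u \<in> A" "\<forall>d\<in>D. leA (fst d) u" for u
    using least[of "(u, snd s)"] that s unfolding prod_le_def by auto
  moreover have "leB (snd s) u" if "u \<in> B" "\<forall>d\<in>D. leB (snd d) u" for u
    using least[of "(fst s, u)"] that s unfolding prod_le_def by auto
  ultimately show "is_sup_in A leA (fst ` D) (fst s) \<and> is_sup_in B leB (snd ` D) (snd s)"
    using s unfolding is_sup_in_def by auto
qed (auto simp: is_sup_in_def prod_le_def mem_Times_iff)

lemma istopology_scott_open_in: "istopology (scott_open_in A le)"
  unfolding istopology_def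
proof (intro conjI allI impI ballI)
  fix S T assume S: "scott_open_in A le S" and T: "scott_open_in A le T"
  show "scott_open_in A le (S \<inter> T)"
  proof (rule scott_open_inI)
    show "S \<inter> T \<subseteq> A" using scott_open_in_subset[OF S] by blast
  next
    fix x y assume "x \<in> S \<inter> T" "y \<in> A" "le x y"
    then show "y \<in> S \<inter> T"
      using scott_open_in_upward[OF S, of x y] scott_open_in_upward[OF T, of x y] by blast
  next
    fix D s assume D: "directed_in A le D" and s: "is_sup_in A le D s" "s \<in> S \<inter> T"
    obtain d1 where d1: "d1 \<in> D" "d1 \<in> S" using scott_open_in_directed[OF S D s(1)] s(2) by blast
    obtain d2 where d2: "d2 \<in> D" "d2 \<in> T" using scott_open_in_directed[OF T D s(1)] s(2) by blast
    obtain z where z: "z \<in> D" "le d1 z" "le d2 z" using D d1(1) d2(1) unfolding directed_in_def by blast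
    have "z \<in> A" using D z(1) unfolding directed_in_def by blast
    then show "\<exists>d\<in>D. d \<in> S \<inter> T"
      using scott_open_in_upward[OF S d1(2) _ z(2)] scott_open_in_upward[OF T d2(2) _ z(3)] z(1) by blast
  qed
next
  fix K assume K: "\<forall>S\<in>K. scott_open_in A le S"
  show "scott_open_in A le (\<Union>K)"
  proof (rule scott_open_inI)
    show "\<Union>K \<subseteq> A" using K scott_open_in_subset by (metis Sup_least)
  next
    fix x y assume "x \<in> \<Union>K" "y \<in> A" "le x y"
    then obtain S where "S \<in> K" "x \<in> S" by blast
    then show "y \<in> \<Union>K" using K scott_open_in_upward[of A le S x y] \<open>y \<in> A\<close> \<open>le x y\<close> by blast
  next
    fix D s assume D: "directed_in A le D" "is_sup_in A le D s" and "s \<in> \<Union>K"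
    then obtain S where "S \<in> K" "s \<in> S" by blast
    then show "\<exists>d\<in>D. d \<in> \<Union>K" using K scott_open_in_directed[OF _ D] by blast
  qed
qed

lemma openin_scott_topology: "openin (scott_topology A le) = scott_open_in A le"
  by (simp add: scott_topology_def istopology_scott_open_in)

lemma topspace_scott_topology: "topspace (scott_topology A le) = A"
proof -
  have "scott_open_in A le A" unfolding scott_open_in_def directed_in_def by blast
  then show ?thesis
    unfolding topspace_def openin_scott_topology using scott_open_in_subset by blast
qed

lemma scott_opens_Union: "\<D> \<subseteq> scott_opens A le \<Longrightarrow> \<Union>\<D> \<in> scott_opens A le"
  using istopology_scott_open_in[of A le] unfolding istopology_def scott_opens_def by blast

lemma scott_opens_empty: "{} \<in> scott_opens A le"
  using scott_opens_Union[of "{}" A le] by simp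

lemma scott_opens_Un: "X \<in> scott_opens A le \<Longrightarrow> Y \<in> scott_opens A le \<Longrightarrow> X \<union> Y \<in> scott_opens A le"
  using scott_opens_Union[of "{X, Y}" A le] by simp

lemma is_sup_in_scott_opens_iff:
  assumes "\<D> \<subseteq> scott_opens A le"
  shows "is_sup_in (scott_opens A le) (\<subseteq>) \<D> S \<longleftrightarrow> S = \<Union>\<D>"
  using scott_opens_Union[OF assms] unfolding is_sup_in_def by blast

lemma is_sup_in_scott_opens_prod:
  assumes "\<D> \<subseteq> scott_opens A leA \<times> scott_opens B leB"
  shows "is_sup_in (scott_opens A leA \<times> scott_opens B leB) (prod_le (\<subseteq>) (\<subseteq>)) \<D>
           (\<Union>(fst ` \<D>), \<Union>(snd ` \<D>))"
proof -
  have "fst ` \<D> \<subseteq> scott_opens A leA" "snd ` \<D> \<subseteq> scott_opens B leB" using assms by auto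
  then show ?thesis by (simp add: is_sup_in_prod_iff is_sup_in_scott_opens_iff)
qed

lemma scott_open_in_scott_opens_supersets:
  assumes "finite F"
  shows "scott_open_in (scott_opens A le) (\<subseteq>) {X \<in> scott_opens A le. F \<subseteq> X}"
proof (rule scott_open_inI)
  fix \<D> S assume dir: "directed_in (scott_opens A le) (\<subseteq>) \<D>"
    and sup: "is_sup_in (scott_opens A le) (\<subseteq>) \<D> S" and S: "S \<in> {X \<in> scott_opens A le. F \<subseteq> X}"
  have "\<D> \<subseteq> scott_opens A le" using dir unfolding directed_in_def by blast
  moreover have "F \<subseteq> \<Union>\<D>"
    using S sup is_sup_in_scott_opens_iff[OF calculation] by blast
  ultimately show "\<exists>X\<in>\<D>. X \<in> {X \<in> scott_opens A le. F \<subseteq> X}"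
    using directed_Union_finite_subset[OF dir assms] by blast
qed blast+

lemma scott_open_in_prod_if_openin_prod_topology:
  assumes "openin (prod_topology (scott_topology A leA) (scott_topology B leB)) W"
  shows "scott_open_in (A \<times> B) (prod_le leA leB) W"
proof -
  have rect: "\<exists>U V. scott_open_in A leA U \<and> scott_open_in B leB V \<and> x \<in> U \<and> y \<in> V \<and> U \<times> V \<subseteq> W"
    if "(x, y) \<in> W" for x y
    using assms that unfolding openin_prod_topology_alt openin_scott_topology by blast
  show ?thesis
  proof (rule scott_open_inI)
    show "W \<subseteq> A \<times> B"
      using openin_subset[OF assms] by (simp add: topspace_scott_topology)
  next
    fix p q assume p: "p \<in> W" and q: "q \<in> A \<times> B" and pq: "prod_le leA leB p q"
    obtain U V where UV: "scott_open_in A leA U" "scott_open_in B leB V" "fst p \<in> U" "snd p \<in> V" "U \<times> V \<subseteq> W"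
      using rect[of "fst p" "snd p"] p by auto
    have "fst q \<in> U" using scott_open_in_upward[OF UV(1,3)] q pq unfolding prod_le_def by auto
    moreover have "snd q \<in> V" using scott_open_in_upward[OF UV(2,4)] q pq unfolding prod_le_def by auto
    ultimately show "q \<in> W" using UV(5) by (metis mem_Times_iff subsetD)
  next
    fix D s assume D: "directed_in (A \<times> B) (prod_le leA leB) D"
      and sup: "is_sup_in (A \<times> B) (prod_le leA leB) D s" and s: "s \<in> W"
    obtain U V where UV: "scott_open_in A leA U" "scott_open_in B leB V" "fst s \<in> U" "snd s \<in> V" "U \<times> V \<subseteq> W"
      using rect[of "fst s" "snd s"] s by auto
    have sups: "is_sup_in A leA (fst ` D) (fst s)" "is_sup_in B leB (snd ` D) (snd s)"
      using sup unfolding is_sup_in_prod_iff by blast+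
    obtain d1 where d1: "d1 \<in> D" "fst d1 \<in> U"
      using scott_open_in_directed[OF UV(1) directed_in_prod_projections(1)[OF D] sups(1) UV(3)] by blast
    obtain d2 where d2: "d2 \<in> D" "snd d2 \<in> V"
      using scott_open_in_directed[OF UV(2) directed_in_prod_projections(2)[OF D] sups(2) UV(4)] by blast
    obtain z where z: "z \<in> D" "prod_le leA leB d1 z" "prod_le leA leB d2 z"
      using D d1(1) d2(1) unfolding directed_in_def by blast
    have "z \<in> A \<times> B" using D z(1) unfolding directed_in_def by blast
    then have "fst z \<in> U" "snd z \<in> V"
      using scott_open_in_upward[OF UV(1) d1(2)] scott_open_in_upward[OF UV(2) d2(2)] z(2,3)
      unfolding prod_le_def by auto
    then have "z \<in> W" using UV(5) by (metis mem_Times_iff subsetD)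
    then show "\<exists>d\<in>D. d \<in> W" using z(1) by blast
  qed
qed

lemma omega_type_countable_open_subset:
  assumes "omega_type X" and "openin X U" and "x \<in> U"
  shows "\<exists>C. openin X C \<and> countable C \<and> x \<in> C \<and> C \<subseteq> U"
proof -
  obtain \<S> where \<S>: "\<forall>s\<in>\<S>. countable s" "X = topology_generated_by \<S>"
    using assms(1) unfolding omega_type_def by blast
  have "\<forall>x\<in>U. \<exists>C. generate_topology_on \<S> C \<and> countable C \<and> x \<in> C \<and> C \<subseteq> U"
    if "generate_topology_on \<S> U" for U
    using that
  proof (induction rule: generate_topology_on.induct)
    case (Int a b)
    show ?case
    proof
      fix x assume "x \<in> a \<inter> b"
      then obtain C1 C2 where "generate_topology_on \<S> C1" "countable C1" "x \<in> C1" "C1 \<subseteq> a"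
        "generate_topology_on \<S> C2" "countable C2" "x \<in> C2" "C2 \<subseteq> b"
        using Int.IH by blast
      then show "\<exists>C. generate_topology_on \<S> C \<and> countable C \<and> x \<in> C \<and> C \<subseteq> a \<inter> b"
        by (intro exI[of _ "C1 \<inter> C2"]) (auto intro: generate_topology_on.Int)
    qed
  next
    case (UN K)
    show ?case
    proof
      fix x assume "x \<in> \<Union>K"
      then obtain k where "k \<in> K" "x \<in> k" by blast
      then show "\<exists>C. generate_topology_on \<S> C \<and> countable C \<and> x \<in> C \<and> C \<subseteq> \<Union>K"
        using UN.IH by blast
    qed
  next
    case (Basis s)
    then show ?case using \<S>(1) by (blast intro: generate_topology_on.Basis)
  qed simp
  moreover have "generate_topology_on \<S> U"
    using assms(2) unfolding \<S>(2) openin_topology_generated_by_iff .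
  ultimately show ?thesis
    using assms(3) unfolding \<S>(2) openin_topology_generated_by_iff by blast
qed

lemma Union_countable_scott_opens:
  assumes "omega_type (scott_topology P le)" and "A \<in> scott_opens P le"
  shows "\<Union>{C \<in> scott_opens P le. countable C \<and> C \<subseteq> A} = A"
proof -
  have "\<exists>C. scott_open_in P le C \<and> countable C \<and> a \<in> C \<and> C \<subseteq> A" if "a \<in> A" for a
    using omega_type_countable_open_subset[OF assms(1), of A a] assms(2) that
    unfolding openin_scott_topology scott_opens_def by blast
  then show ?thesis unfolding scott_opens_def by blast
qed

lemma directed_in_countable_scott_opens:
  "directed_in (scott_opens P le) (\<subseteq>) {C \<in> scott_opens P le. countable C \<and> C \<subseteq> A}"
  unfolding directed_in_def
proof (intro conjI ballI)
  fix C1 C2 assume "C1 \<in> {C \<in> scott_opens P le. countable C \<and> C \<subseteq> A}"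
    and "C2 \<in> {C \<in> scott_opens P le. countable C \<and> C \<subseteq> A}"
  then have "C1 \<union> C2 \<in> {C \<in> scott_opens P le. countable C \<and> C \<subseteq> A}"
    using scott_opens_Un[of C1 P le C2] by simp
  then show "\<exists>C\<in>{C \<in> scott_opens P le. countable C \<and> C \<subseteq> A}. C1 \<subseteq> C \<and> C2 \<subseteq> C" by blast
qed (use scott_opens_empty in auto)

lemma scott_open_prod_countable_below:
  assumes "omega_type (scott_topology P leP)" and "omega_type (scott_topology Q leQ)"
    and W: "scott_open_in (scott_opens P leP \<times> scott_opens Q leQ) (prod_le (\<subseteq>) (\<subseteq>)) W"
    and "(A, B) \<in> W"
  shows "\<exists>C C'. C \<in> scott_opens P leP \<and> countable C \<and> C \<subseteq> A \<and>
                C' \<in> scott_opens Q leQ \<and> countable C' \<and> C' \<subseteq> B \<and> (C, C') \<in> W"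
proof -
  define \<G> where "\<G> = {C \<in> scott_opens P leP. countable C \<and> C \<subseteq> A}"
  define \<H> where "\<H> = {C \<in> scott_opens Q leQ. countable C \<and> C \<subseteq> B}"
  have "A \<in> scott_opens P leP" "B \<in> scott_opens Q leQ"
    using scott_open_in_subset[OF W] \<open>(A, B) \<in> W\<close> by auto
  then have "\<Union>\<G> = A" "\<Union>\<H> = B"
    unfolding \<G>_def \<H>_def using Union_countable_scott_opens assms(1,2) by blast+
  moreover have "\<G> \<noteq> {}" "\<H> \<noteq> {}" unfolding \<G>_def \<H>_def using scott_opens_empty by blast+
  moreover have "\<G> \<times> \<H> \<subseteq> scott_opens P leP \<times> scott_opens Q leQ" unfolding \<G>_def \<H>_def by blast
  ultimately have "is_sup_in (scott_opens P leP \<times> scott_opens Q leQ) (prod_le (\<subseteq>) (\<subseteq>)) (\<G> \<times> \<H>) (A, B)"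
    using is_sup_in_scott_opens_prod[of "\<G> \<times> \<H>" P leP Q leQ] by auto
  moreover have "directed_in (scott_opens P leP \<times> scott_opens Q leQ) (prod_le (\<subseteq>) (\<subseteq>)) (\<G> \<times> \<H>)"
    unfolding \<G>_def \<H>_def by (intro directed_in_Times directed_in_countable_scott_opens)
  ultimately obtain p where "p \<in> \<G> \<times> \<H>" "p \<in> W"
    using scott_open_in_directed[OF W] \<open>(A, B) \<in> W\<close> by blast
  then show ?thesis unfolding \<G>_def \<H>_def by auto
qed

definition enum_prefix :: "'a set \<Rightarrow> nat \<Rightarrow> 'a set" where
  "enum_prefix C n = {x \<in> C. to_nat_on C x < n}"

lemma finite_enum_prefix:
  assumes "countable C"
  shows "finite (enum_prefix C n)"
proof -
  have "inj_on (to_nat_on C) (enum_prefix C n)"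
    using inj_on_to_nat_on[OF assms] unfolding enum_prefix_def by (rule inj_on_subset) blast
  moreover have "to_nat_on C ` enum_prefix C n \<subseteq> {..<n}" unfolding enum_prefix_def by auto
  ultimately show ?thesis using inj_on_finite by blast
qed

lemma enum_prefix_subset: "enum_prefix C n \<subseteq> C"
  unfolding enum_prefix_def by blast

lemma mem_enum_prefix: "a \<in> C \<Longrightarrow> to_nat_on C a < n \<Longrightarrow> a \<in> enum_prefix C n"
  unfolding enum_prefix_def by blast

lemma scott_opens_tail_Inter:
  assumes "poset_on P le" and C: "C \<in> scott_opens P le"
    and X: "\<And>n. X n \<in> scott_opens P le" and prefix: "\<And>n. enum_prefix C n \<subseteq> X n"
  shows "{a \<in> C. \<forall>n\<ge>k. a \<in> X n} \<in> scott_opens P le"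
  unfolding scott_opens_def mem_Collect_eq
proof (rule scott_open_inI)
  have C_open: "scott_open_in P le C" and X_open: "\<And>n. scott_open_in P le (X n)"
    using C X unfolding scott_opens_def by auto
  show "{a \<in> C. \<forall>n\<ge>k. a \<in> X n} \<subseteq> P" using scott_open_in_subset[OF C_open] by blast
  show "y \<in> {a \<in> C. \<forall>n\<ge>k. a \<in> X n}"
    if x: "x \<in> {a \<in> C. \<forall>n\<ge>k. a \<in> X n}" and y: "y \<in> P" "le x y" for x y
  proof -
    have "y \<in> X n" if "k \<le> n" for n using scott_open_in_upward[OF X_open[of n] _ y] x that by blast
    then show ?thesis using scott_open_in_upward[OF C_open _ y] x by blast
  qed
  fix D s assume D: "directed_in P le D" and sup: "is_sup_in P le D s"
    and s: "s \<in> {a \<in> C. \<forall>n\<ge>k. a \<in> X n}"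
  obtain d0 where d0: "d0 \<in> D" "d0 \<in> C" using scott_open_in_directed[OF C_open D sup] s by blast
  define N where "N = Suc (to_nat_on C d0)"
  have d0_X: "d0 \<in> X n" if "N \<le> n" for n
    using mem_enum_prefix[OF d0(2)] prefix[of n] that unfolding N_def by auto
  have "\<forall>n\<in>{k..<N}. \<exists>d\<in>D. d \<in> X n"
    using s scott_open_in_directed[OF X_open D sup] by auto
  then obtain d where d: "\<And>n. n \<in> {k..<N} \<Longrightarrow> d n \<in> D \<and> d n \<in> X n" by metis
  \<comment> \<open>d0 already lies in every X n with n \<ge> N, so finitely many witnesses suffice.\<close>
  obtain z where z: "z \<in> D" "\<forall>x\<in>insert d0 (d ` {k..<N}). le x z"
    using directed_in_finite_upper_bound[OF assms(1) D, of "insert d0 (d ` {k..<N})"] d0(1) d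
    by blast
  have "z \<in> P" using D z(1) unfolding directed_in_def by blast
  have "z \<in> X n" if "k \<le> n" for n
  proof (cases "N \<le> n")
    case True
    then show ?thesis using scott_open_in_upward[OF X_open d0_X \<open>z \<in> P\<close>] z(2) by blast
  next
    case False
    then have "n \<in> {k..<N}" using that by simp
    then show ?thesis using d scott_open_in_upward[OF X_open _ \<open>z \<in> P\<close>] z(2) by blast
  qed
  moreover have "z \<in> C" using scott_open_in_upward[OF C_open d0(2) \<open>z \<in> P\<close>] z(2) by blast
  ultimately show "\<exists>d\<in>D. d \<in> {a \<in> C. \<forall>n\<ge>k. a \<in> X n}" using z(1) by blast
qed

lemma scott_opens_incseq_below:
  assumes "poset_on P le" and "C \<in> scott_opens P le"
    and "\<And>n. X n \<in> scott_opens P le" and prefix: "\<And>n. enum_prefix C n \<subseteq> X n"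
  shows "\<exists>Z. incseq Z \<and> (\<forall>k. Z k \<in> scott_opens P le \<and> Z k \<subseteq> X k) \<and> (\<Union>k. Z k) = C"
proof (intro exI conjI allI)
  let ?Z = "\<lambda>k. {a \<in> C. \<forall>n\<ge>k. a \<in> X n}"
  show "incseq ?Z" by (auto simp: incseq_def)
  show "?Z k \<in> scott_opens P le" for k using scott_opens_tail_Inter assms by blast
  show "?Z k \<subseteq> X k" for k by blast
  have "a \<in> ?Z (Suc (to_nat_on C a))" if "a \<in> C" for a
    using that mem_enum_prefix[OF that] prefix by fastforce
  then show "(\<Union>k. ?Z k) = C" by blast
qed

lemma enum_prefix_rectangle_subset:
  assumes "poset_on P leP" and "poset_on Q leQ"
    and W: "scott_open_in (scott_opens P leP \<times> scott_opens Q leQ) (prod_le (\<subseteq>) (\<subseteq>)) W"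
    and C: "C \<in> scott_opens P leP" and C': "C' \<in> scott_opens Q leQ" and "(C, C') \<in> W"
  shows "\<exists>n. {X \<in> scott_opens P leP. enum_prefix C n \<subseteq> X} \<times>
             {Y \<in> scott_opens Q leQ. enum_prefix C' n \<subseteq> Y} \<subseteq> W"
proof (rule ccontr)
  assume "\<not> ?thesis"
  then have "\<exists>X Y. X \<in> scott_opens P leP \<and> enum_prefix C n \<subseteq> X \<and>
      Y \<in> scott_opens Q leQ \<and> enum_prefix C' n \<subseteq> Y \<and> (X, Y) \<notin> W" for n
    by blast
  then obtain X Y where X: "\<And>n. X n \<in> scott_opens P leP" "\<And>n. enum_prefix C n \<subseteq> X n"
    and Y: "\<And>n. Y n \<in> scott_opens Q leQ" "\<And>n. enum_prefix C' n \<subseteq> Y n"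
    and XY: "\<And>n. (X n, Y n) \<notin> W"
    by metis
  obtain Z where Z: "incseq Z" "\<And>k. Z k \<in> scott_opens P leP" "\<And>k. Z k \<subseteq> X k" "(\<Union>k. Z k) = C"
    using scott_opens_incseq_below[OF assms(1) C X] by blast
  obtain T where T: "incseq T" "\<And>k. T k \<in> scott_opens Q leQ" "\<And>k. T k \<subseteq> Y k" "(\<Union>k. T k) = C'"
    using scott_opens_incseq_below[OF assms(2) C' Y] by blast
  let ?\<D> = "range (\<lambda>k. (Z k, T k))"
  have \<D>: "?\<D> \<subseteq> scott_opens P leP \<times> scott_opens Q leQ" using Z(2) T(2) by blast
  have "directed_in (scott_opens P leP \<times> scott_opens Q leQ) (prod_le (\<subseteq>) (\<subseteq>)) ?\<D>"
    using \<D> Z(1) T(1) by (intro directed_in_chain) (auto simp: prod_le_def incseq_def)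
  moreover have "is_sup_in (scott_opens P leP \<times> scott_opens Q leQ) (prod_le (\<subseteq>) (\<subseteq>)) ?\<D> (C, C')"
    using is_sup_in_scott_opens_prod[OF \<D>] Z(4) T(4) by (simp add: image_image)
  ultimately obtain k where "(Z k, T k) \<in> W"
    using scott_open_in_directed[OF W] \<open>(C, C') \<in> W\<close> by blast
  moreover have "prod_le (\<subseteq>) (\<subseteq>) (Z k, T k) (X k, Y k)" using Z(3) T(3) by (simp add: prod_le_def)
  ultimately have "(X k, Y k) \<in> W" using scott_open_in_upward[OF W] X(1) Y(1) by blast
  then show False using XY by blast
qed

lemma openin_prod_topology_if_scott_open_in:
  assumes "poset_on P leP" and "poset_on Q leQ"
    and "omega_type (scott_topology P leP)" and "omega_type (scott_topology Q leQ)"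
    and W: "scott_open_in (scott_opens P leP \<times> scott_opens Q leQ) (prod_le (\<subseteq>) (\<subseteq>)) W"
  shows "openin (prod_topology (scott_topology (scott_opens P leP) (\<subseteq>))
                               (scott_topology (scott_opens Q leQ) (\<subseteq>))) W"
  unfolding openin_prod_topology_alt openin_scott_topology
proof (intro allI impI)
  fix A B assume "(A, B) \<in> W"
  then have AB: "A \<in> scott_opens P leP" "B \<in> scott_opens Q leQ"
    using scott_open_in_subset[OF W] by auto
  obtain C C' where C: "C \<in> scott_opens P leP" "countable C" "C \<subseteq> A"
    and C': "C' \<in> scott_opens Q leQ" "countable C'" "C' \<subseteq> B" and "(C, C') \<in> W"
    using scott_open_prod_countable_below[OF assms(3,4) W \<open>(A, B) \<in> W\<close>] by blast
  then obtain n where "{X \<in> scott_opens P leP. enum_prefix C n \<subseteq> X} \<times>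
      {Y \<in> scott_opens Q leQ. enum_prefix C' n \<subseteq> Y} \<subseteq> W"
    using enum_prefix_rectangle_subset[OF assms(1,2) W C(1) C'(1)] by blast
  moreover have "A \<in> {X \<in> scott_opens P leP. enum_prefix C n \<subseteq> X}"
    using AB(1) C(3) enum_prefix_subset[of C n] by blast
  moreover have "B \<in> {Y \<in> scott_opens Q leQ. enum_prefix C' n \<subseteq> Y}"
    using AB(2) C'(3) enum_prefix_subset[of C' n] by blast
  moreover note scott_open_in_scott_opens_supersets[OF finite_enum_prefix[OF C(2)]]
    scott_open_in_scott_opens_supersets[OF finite_enum_prefix[OF C'(2)]]
  ultimately show "\<exists>U V. scott_open_in (scott_opens P leP) (\<subseteq>) U \<and> scott_open_in (scott_opens Q leQ) (\<subseteq>) V \<and>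
      A \<in> U \<and> B \<in> V \<and> U \<times> V \<subseteq> W"
    by (intro exI conjI)
qed

theorem theorem4p8:
  fixes P :: "'a set" and leP :: "'a \<Rightarrow> 'a \<Rightarrow> bool"
    and Q :: "'b set" and leQ :: "'b \<Rightarrow> 'b \<Rightarrow> bool"
  assumes "poset_on P leP" and "poset_on Q leQ"
    and "omega_type (scott_topology P leP)"
    and "omega_type (scott_topology Q leQ)"
  shows "prod_topology (scott_topology (scott_opens P leP) (\<subseteq>))
                       (scott_topology (scott_opens Q leQ) (\<subseteq>))
       = scott_topology (scott_opens P leP \<times> scott_opens Q leQ) (prod_le (\<subseteq>) (\<subseteq>))"
  unfolding topology_eq openin_scott_topology
proof (intro allI iffI)
  show "scott_open_in (scott_opens P leP \<times> scott_opens Q leQ) (prod_le (\<subseteq>) (\<subseteq>)) W"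
    if "openin (prod_topology (scott_topology (scott_opens P leP) (\<subseteq>))
                               (scott_topology (scott_opens Q leQ) (\<subseteq>))) W" for W
    using that by (rule scott_open_in_prod_if_openin_prod_topology)
qed (rule openin_prod_topology_if_scott_open_in[OF assms])

end
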